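(* Let $\alpha,\beta$ be real numbers with $\alpha \neq 0$, $\beta \neq 0$, $\beta \neq 1$ and $\alpha \neq \beta$. Let $g(x)=\alpha x(1-x)$ and $h(x)=\beta x(1-x)$, and let $x_\alpha=\frac{\alpha-1}{\alpha}$ and $x_\beta=\frac{\beta-1}{\beta}$ be their nontrivial fixed points. Then the two-point set $\Lambda=\{x_\alpha,x_\beta\}$ is a 2-point toss-and-catch, i.e. $h(x_\alpha)=x_\beta$, $g(x_\beta)=x_\alpha$ and $\Lambda=g(\Lambda)\cup h(\Lambda)$, if and only if $$\alpha=\frac{\beta}{\beta-1}.$$
   Context: For $\gamma\in\mathbb{R}$ let $f_\gamma(x)=\gamma x(1-x)$ denote the logistic map. The logistic IFS is the pair $\{g,h\}=\{f_\alpha,f_\beta\}$, where at each time step $g$ is applied with probability $p\in(0,1)$ and $h$ with probability $1-p$, independently. An invariant set of the IFS is a set $\Lambda$ with $\Lambda=g(\Lambda)\cup h(\Lambda)$; a finite invariant set with $n$ points is called an $n$-point toss-and-catch. In the 2-point toss-and-catch considered here, the fixed point of $g$ is sent by $h$ to the fixed point of $h$ and vice versa. *)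

theory Defs
  imports Complex_Main
begin

definition logistic :: "real \<Rightarrow> real \<Rightarrow> real" where
  "logistic \<gamma> x = \<gamma> * x * (1 - x)"

definition logistic_fix :: "real \<Rightarrow> real" where
  "logistic_fix \<gamma> = (\<gamma> - 1) / \<gamma>"

end

theory Submission
  imports Defs
begin

text \<open>Clearing denominators, \<open>h(x\<^sub>\<alpha>) = x\<^sub>\<beta>\<close> becomes
  \<open>(\<beta> - \<alpha>)(\<alpha>\<beta> - \<alpha> - \<beta>) = 0\<close>. For \<open>\<alpha> \<noteq> \<beta>\<close> this is the condition
  \<open>\<alpha>\<beta> = \<alpha> + \<beta>\<close>, which is symmetric in \<open>\<alpha>, \<beta>\<close> and hence also equivalent to
  \<open>g(x\<^sub>\<beta>) = x\<^sub>\<alpha>\<close>. Invariance of \<open>{x\<^sub>\<alpha>, x\<^sub>\<beta>}\<close> is then automatic, because each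
  map fixes its own fixed point and sends the other one to it.\<close>

lemma logistic_logistic_fix:
  assumes "\<gamma> \<noteq> 0"
  shows "logistic \<gamma> (logistic_fix \<gamma>) = logistic_fix \<gamma>"
  using assms by (simp add: logistic_def logistic_fix_def field_simps)

lemma logistic_logistic_fix_other_iff:
  fixes a b :: real
  assumes "a \<noteq> 0" "b \<noteq> 0" "a \<noteq> b"
  shows "logistic b (logistic_fix a) = logistic_fix b \<longleftrightarrow> a * b = a + b"
proof -
  have "logistic b (logistic_fix a) = logistic_fix b \<longleftrightarrow> b\<^sup>2 * (a - 1) = a\<^sup>2 * (b - 1)"
    using assms by (simp add: logistic_def logistic_fix_def field_simps power2_eq_square)
  also have "\<dots> \<longleftrightarrow> (b - a) * (a * b - (a + b)) = 0"
    by (simp add: algebra_simps power2_eq_square)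
  also have "\<dots> \<longleftrightarrow> a * b = a + b"
    using assms by simp
  finally show ?thesis .
qed

lemma two_point_set_invariant:
  assumes "f x = x" "g y = y" "g x = y" "f y = x"
  shows "{x, y} = f ` {x, y} \<union> g ` {x, y}"
  using assms by auto

lemma mult_eq_add_iff_eq_divide:
  fixes a b :: real
  assumes "b \<noteq> 1"
  shows "a * b = a + b \<longleftrightarrow> a = b / (b - 1)"
  using assms by (simp add: field_simps)

theorem mainTheorem1:
  fixes \<alpha> \<beta> :: real
  assumes "\<alpha> \<noteq> 0" and "\<beta> \<noteq> 0" and "\<beta> \<noteq> 1" and "\<alpha> \<noteq> \<beta>"
  shows "(logistic \<beta> (logistic_fix \<alpha>) = logistic_fix \<beta> \<and>
          logistic \<alpha> (logistic_fix \<beta>) = logistic_fix \<alpha> \<and>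
          {logistic_fix \<alpha>, logistic_fix \<beta>} =
            logistic \<alpha> ` {logistic_fix \<alpha>, logistic_fix \<beta>} \<union>
            logistic \<beta> ` {logistic_fix \<alpha>, logistic_fix \<beta>})
         \<longleftrightarrow> \<alpha> = \<beta> / (\<beta> - 1)"
proof -
  have toss: "logistic \<beta> (logistic_fix \<alpha>) = logistic_fix \<beta> \<longleftrightarrow> \<alpha> * \<beta> = \<alpha> + \<beta>"
    using logistic_logistic_fix_other_iff assms by blast
  have catch: "logistic \<alpha> (logistic_fix \<beta>) = logistic_fix \<alpha> \<longleftrightarrow> \<alpha> * \<beta> = \<alpha> + \<beta>"
    using logistic_logistic_fix_other_iff[of \<beta> \<alpha>] assms by (simp add: ac_simps)
  have "\<alpha> * \<beta> = \<alpha> + \<beta> \<Longrightarrow>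
      {logistic_fix \<alpha>, logistic_fix \<beta>} =
        logistic \<alpha> ` {logistic_fix \<alpha>, logistic_fix \<beta>} \<union>
        logistic \<beta> ` {logistic_fix \<alpha>, logistic_fix \<beta>}"
    using two_point_set_invariant logistic_logistic_fix assms toss catch by metis
  then show ?thesis
    using toss catch mult_eq_add_iff_eq_divide[OF \<open>\<beta> \<noteq> 1\<close>] by blast
qed

end
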